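(* Let $K$ be a field of characteristic zero. For each integer $n\ge1$ let $T_n\in\mathbb{Z}[x]$ be the polynomial of degree $n$ such that $\mathrm{trace}(\sigma^{(n)}(s))=T_n(\mathrm{trace}(s))$ for all $s\in SL_2(K)$, where $\sigma^{(n)}$ is the $n$-th symmetric power of the standard representation of $SL_2(K)$. Let $n_1,\dots,n_r$ and $m_1,\dots,m_t$ be positive integers. Suppose there exists an infinite subset $\Sigma\subset SL_2(K)$ whose elements have pairwise distinct traces such that $$\prod_{i=1}^{r}T_{n_i}(\mathrm{trace}(s))=\prod_{j=1}^{t}T_{m_j}(\mathrm{trace}(s))\quad\text{for every } s\in\Sigma.$$ Then $r=t$ and, after reordering, $n_i=m_i$ for all $i$. *)

theory Defs
  imports "HOL-Analysis.Analysis" "HOL-Computational_Algebra.Polynomial"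
begin

definition SL2 :: "('a::field^2^2) set" where
  "SL2 = {A. det A = 1}"

text \<open>The n-th symmetric power of the standard representation: the matrix of the
action of A on homogeneous polynomials of degree n in X, Y (basis X^i Y^(n-i), i=0..n),
where A sends X to A11 X + A21 Y and Y to A12 X + A22 Y.  Dehomogenising (Y = 1), the
image of the basis vector X^k Y^(n-k) is (A11 x + A21)^k (A12 x + A22)^(n-k), and the
(i,k) entry is its coefficient of x^i.\<close>
definition sym_pow_entry :: "nat \<Rightarrow> 'a::field^2^2 \<Rightarrow> nat \<Rightarrow> nat \<Rightarrow> 'a" where
  "sym_pow_entry n A i k =
     coeff ([:A$2$1, A$1$1:] ^ k * [:A$2$2, A$1$2:] ^ (n - k)) i"

definition sym_pow_trace :: "nat \<Rightarrow> 'a::field^2^2 \<Rightarrow> 'a" where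
  "sym_pow_trace n A = (\<Sum>k\<le>n. sym_pow_entry n A k k)"

end

theory Submission
  imports Defs
begin

(* Evaluating the trace identity at diagonal matrices diag(a, a^-1) gives
   (a - a^-1) T_n(a + a^-1) = a^(n+1) - a^-(n+1) for infinitely many values a + a^-1,
   so T_n is the rescaled Chebyshev polynomial S_n. Since the traces of Sigma are infinitely
   many, the pointwise identity becomes the polynomial identity prod S_(n_i) = prod S_(m_j).
   The real number 2 cos(pi/(N+1)) is a root of S_N at which every S_m with m < N is
   positive, so the largest index occurring on either side occurs on both sides; cancelling
   it and inducting on the total number of factors gives equality of the multisets. *)

lemma map_poly_of_int_add:
  "map_poly (of_int :: int \<Rightarrow> 'a::comm_ring_1) (p + q) = map_poly of_int p + map_poly of_int q"
  by (rule poly_eqI) (simp add: coeff_map_poly)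

lemma map_poly_of_int_diff:
  "map_poly (of_int :: int \<Rightarrow> 'a::comm_ring_1) (p - q) = map_poly of_int p - map_poly of_int q"
  by (rule poly_eqI) (simp add: coeff_map_poly)

lemma map_poly_of_int_mult:
  "map_poly (of_int :: int \<Rightarrow> 'a::comm_ring_1) (p * q) = map_poly of_int p * map_poly of_int q"
  by (induction p rule: pCons_induct)
    (simp_all add: map_poly_of_int_add map_poly_pCons map_poly_smult)

lemma map_poly_of_int_prod_mset:
  "map_poly (of_int :: int \<Rightarrow> 'a::comm_ring_1) (\<Prod>x\<in>#A. f x) = (\<Prod>x\<in>#A. map_poly of_int (f x))"
  by (induction A) (simp_all add: map_poly_of_int_mult)

lemma map_poly_of_int_eq_iff:
  "map_poly (of_int :: int \<Rightarrow> 'a::ring_char_0) p = map_poly of_int q \<longleftrightarrow> p = q"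
  by (simp add: poly_eq_iff coeff_map_poly)

lemma poly_eqI_infinite:
  fixes p q :: "'a::idom poly"
  assumes "infinite A" and "\<And>x. x \<in> A \<Longrightarrow> poly p x = poly q x"
  shows "p = q"
proof (rule ccontr)
  assume "p \<noteq> q"
  then have "finite {x. poly (p - q) x = 0}"
    by (intro poly_roots_finite) simp
  moreover have "A \<subseteq> {x. poly (p - q) x = 0}"
    using assms(2) by auto
  ultimately show False
    using assms(1) finite_subset by blast
qed

(* S_n(x) = U_n(x/2), where U_n is the Chebyshev polynomial of the second kind. *)
fun chebyshev_S :: "nat \<Rightarrow> 'a::comm_ring_1 poly" where
  "chebyshev_S 0 = 1"
| "chebyshev_S (Suc 0) = [:0, 1:]"
| "chebyshev_S (Suc (Suc n)) = [:0, 1:] * chebyshev_S (Suc n) - chebyshev_S n"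

lemma map_poly_of_int_chebyshev_S:
  "map_poly of_int (chebyshev_S n) = (chebyshev_S n :: 'a::comm_ring_1 poly)"
  by (induction n rule: chebyshev_S.induct)
    (simp_all add: map_poly_of_int_diff map_poly_of_int_mult map_poly_pCons)

lemma chebyshev_S_plus_inverse:
  fixes a :: "'a::field"
  shows "(a - inverse a) * poly (chebyshev_S n) (a + inverse a) = a ^ Suc n - inverse a ^ Suc n"
proof (induction n rule: chebyshev_S.induct)
  case (3 n)
  let ?b = "inverse a" and ?S = "\<lambda>k. poly (chebyshev_S k) (a + inverse a)"
  have "(a - ?b) * ?S (Suc (Suc n)) = (a + ?b) * ((a - ?b) * ?S (Suc n)) - (a - ?b) * ?S n"
    by (simp add: algebra_simps)
  also have "\<dots> = (a + ?b) * (a ^ Suc (Suc n) - ?b ^ Suc (Suc n)) - (a ^ Suc n - ?b ^ Suc n)"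
    using "3.IH" by simp
  also have "\<dots> = a ^ Suc (Suc (Suc n)) - ?b ^ Suc (Suc (Suc n))"
    by (cases "a = 0") (simp_all add: field_simps)
  finally show ?case .
qed (auto simp: field_simps)

lemma chebyshev_S_two_cos:
  "sin \<theta> * poly (chebyshev_S n) (2 * cos \<theta>) = sin (real (Suc n) * \<theta>)"
proof (induction n rule: chebyshev_S.induct)
  case (3 n)
  let ?S = "\<lambda>k. poly (chebyshev_S k) (2 * cos \<theta>)"
  have "sin \<theta> * ?S (Suc (Suc n)) = 2 * cos \<theta> * (sin \<theta> * ?S (Suc n)) - sin \<theta> * ?S n"
    by (simp add: algebra_simps)
  also have "\<dots> = 2 * cos \<theta> * sin ((n + 2) * \<theta>) - sin ((n + 1) * \<theta>)"
    using "3.IH" by (simp add: add.commute)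
  also have "\<dots> = sin ((n + 3) * \<theta>)"
    using sin_add[of "(n + 2) * \<theta>" \<theta>] sin_diff[of "(n + 2) * \<theta>" \<theta>]
    by (simp add: algebra_simps)
  finally show ?case by (simp add: add.commute)
qed (simp_all add: sin_double)

lemma chebyshev_S_pos:
  assumes "m < N"
  shows "poly (chebyshev_S m) (2 * cos (pi / Suc N)) > (0::real)"
proof -
  let ?\<theta> = "pi / Suc N"
  have "real (Suc m) * ?\<theta> < real (Suc N) * ?\<theta>"
    using assms by (intro mult_strict_right_mono) simp_all
  then have "real (Suc m) * ?\<theta> < pi"
    by simp
  moreover have "?\<theta> \<le> real (Suc m) * ?\<theta>"
    using mult_right_mono[of 1 "real (Suc m)" ?\<theta>] by simp
  ultimately have "0 < sin ?\<theta>" and "0 < sin (real (Suc m) * ?\<theta>)"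
    by (intro sin_gt_zero; simp)+
  then show ?thesis
    using chebyshev_S_two_cos[of ?\<theta> m] by (metis zero_less_mult_pos)
qed

lemma chebyshev_S_root:
  assumes "N \<ge> 1"
  shows "poly (chebyshev_S N) (2 * cos (pi / Suc N)) = (0::real)"
proof -
  have "sin (pi / Suc N) \<noteq> 0"
    using assms by (simp add: sin_gt_zero field_simps less_imp_neq[symmetric])
  with chebyshev_S_two_cos[of "pi / Suc N" N] show ?thesis
    by simp
qed

lemma chebyshev_S_neq_0: "(chebyshev_S n :: real poly) \<noteq> 0"
  using chebyshev_S_pos[of n "Suc n"] by auto

definition diag2 :: "'a::zero \<Rightarrow> 'a \<Rightarrow> 'a^2^2" where
  "diag2 a b = vector [vector [a, 0], vector [0, b]]"

lemma det_diag2: "det (diag2 a b) = a * b"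
  by (simp add: diag2_def det_2)

lemma trace_diag2: "trace (diag2 a b) = a + b"
  by (simp add: diag2_def trace_def UNIV_2)

lemma sym_pow_trace_diag2: "sym_pow_trace n (diag2 a b) = (\<Sum>k\<le>n. a ^ k * b ^ (n - k))"
proof -
  have "sym_pow_entry n (diag2 a b) k k = a ^ k * b ^ (n - k)" for k
  proof -
    have "[:0, a:] ^ k = monom (a ^ k) k"
      by (induction k) (simp_all add: monom_Suc smult_monom)
    moreover have "[:b, 0:] ^ (n - k) = [:b ^ (n - k):]"
      by (simp add: poly_const_pow)
    ultimately show ?thesis
      by (simp add: sym_pow_entry_def diag2_def coeff_monom_mult)
  qed
  then show ?thesis
    by (simp add: sym_pow_trace_def)
qed

lemma plus_inverse_eq_plus_inverse_iff:
  fixes a b :: "'a::field"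
  assumes "a \<noteq> 0" "b \<noteq> 0"
  shows "a + inverse a = b + inverse b \<longleftrightarrow> a = b \<or> a * b = 1"
proof -
  have "a + inverse a - (b + inverse b) = (a - b) * (a * b - 1) / (a * b)"
    using assms by (simp add: field_simps)
  then show ?thesis
    using assms by (auto simp: right_minus_eq)
qed

lemma sym_pow_trace_eq_chebyshev_S:
  fixes p :: "int poly"
  assumes "\<And>s::'a::field_char_0^2^2. s \<in> SL2 \<Longrightarrow>
             sym_pow_trace n s = poly (map_poly of_int p) (trace s)"
  shows "p = chebyshev_S n"
proof -
  define t :: "nat \<Rightarrow> 'a" where "t j = of_nat j + inverse (of_nat j)" for j
  have "inj_on t {2..}"
    by (rule inj_onI) (auto simp: t_def plus_inverse_eq_plus_inverse_iff simp flip: of_nat_mult)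
  then have "infinite (t ` {2..})"
    using finite_image_iff infinite_Ici by blast
  moreover have "poly (map_poly of_int p) x = poly (chebyshev_S n) x" if "x \<in> t ` {2..}" for x
  proof -
    obtain j where j: "j \<ge> 2" and x: "x = t j"
      using \<open>x \<in> t ` {2..}\<close> by auto
    define a :: 'a where "a = of_nat j"
    have "a \<noteq> 0" and "a * a \<noteq> 1"
      using j by (simp_all add: a_def flip: of_nat_mult)
    then have "a - inverse a \<noteq> 0"
      by (auto simp: field_simps)
    have "diag2 a (inverse a) \<in> SL2"
      using \<open>a \<noteq> 0\<close> by (simp add: SL2_def det_diag2)
    then have "poly (map_poly of_int p) (a + inverse a) = (\<Sum>k\<le>n. a ^ k * inverse a ^ (n - k))"
      using assms by (simp add: trace_diag2 flip: sym_pow_trace_diag2)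
    then have "(a - inverse a) * poly (map_poly of_int p) (a + inverse a)
        = (a - inverse a) * (\<Sum>k\<le>n. a ^ k * inverse a ^ (n - k))"
      by simp
    also have "\<dots> = (a - inverse a) * poly (chebyshev_S n) (a + inverse a)"
      by (simp only: chebyshev_S_plus_inverse diff_power_eq_sum lessThan_Suc_atMost)
    finally show ?thesis
      using \<open>a - inverse a \<noteq> 0\<close> by (simp add: x t_def a_def)
  qed
  ultimately have "map_poly of_int p = (map_poly of_int (chebyshev_S n) :: 'a poly)"
    by (simp add: map_poly_of_int_chebyshev_S poly_eqI_infinite)
  then show ?thesis
    by (simp add: map_poly_of_int_eq_iff)
qed

lemma mem_mset_if_prod_mset_eq:
  fixes P :: "'i::linorder \<Rightarrow> 'a::idom poly"
  assumes separating: "\<And>N. N \<in> S \<Longrightarrow>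
      \<exists>x. poly (P N) x = 0 \<and> (\<forall>m\<in>S. m < N \<longrightarrow> poly (P m) x \<noteq> 0)"
    and "N \<in># A" "N \<in> S" "set_mset B \<subseteq> S" "\<forall>m\<in>#B. m \<le> N"
    and "(\<Prod>n\<in>#A. P n) = (\<Prod>n\<in>#B. P n)"
  shows "N \<in># B"
proof -
  obtain x where x: "poly (P N) x = 0" "\<forall>m\<in>S. m < N \<longrightarrow> poly (P m) x \<noteq> 0"
    using separating \<open>N \<in> S\<close> by blast
  have "(\<Prod>n\<in>#A. poly (P n) x) = 0"
    using \<open>N \<in># A\<close> x(1) by (auto simp: prod_mset_zero_iff)
  then have "(\<Prod>n\<in>#B. poly (P n) x) = 0"
    using assms(6) by (metis poly_prod_mset)
  then obtain m where "m \<in># B" "poly (P m) x = 0"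
    by (auto simp: prod_mset_zero_iff)
  with x(2) assms(4,5) have "m = N"
    by (metis antisym_conv2 subsetD)
  with \<open>m \<in># B\<close> show ?thesis
    by simp
qed

lemma mset_eq_if_prod_mset_eq:
  fixes P :: "'i::linorder \<Rightarrow> 'a::idom poly"
  assumes separating: "\<And>N. N \<in> S \<Longrightarrow>
      \<exists>x. poly (P N) x = 0 \<and> (\<forall>m\<in>S. m < N \<longrightarrow> poly (P m) x \<noteq> 0)"
    and nonzero: "\<And>n. n \<in> S \<Longrightarrow> P n \<noteq> 0"
    and "set_mset A \<subseteq> S" "set_mset B \<subseteq> S"
    and "(\<Prod>n\<in>#A. P n) = (\<Prod>n\<in>#B. P n)"
  shows "A = B"
  using assms(3-)
proof (induction "size A + size B" arbitrary: A B rule: less_induct)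
  case less
  show ?case
  proof (cases "A + B = {#}")
    case False
    define N where "N = Max (set_mset (A + B))"
    have "N \<in># A + B"
      using False unfolding N_def by (metis Max_in finite_set_mset set_mset_eq_empty_iff)
    have N_max: "\<forall>m\<in>#A + B. m \<le> N"
      by (simp add: N_def)
    have "N \<in> S"
      using \<open>N \<in># A + B\<close> less.prems by auto
    have "N \<in># A \<and> N \<in># B"
      using mem_mset_if_prod_mset_eq[OF separating, of N A B]
        mem_mset_if_prod_mset_eq[OF separating, of N B A]
        \<open>N \<in># A + B\<close> \<open>N \<in> S\<close> N_max less.prems by auto
    then obtain A' B' where A: "A = add_mset N A'" and B: "B = add_mset N B'"
      by (metis mset_add)
    have "(\<Prod>n\<in>#A'. P n) = (\<Prod>n\<in>#B'. P n)"
      using less.prems(3) nonzero[OF \<open>N \<in> S\<close>] by (simp add: A B)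
    then have "A' = B'"
      using less.hyps less.prems(1,2) by (simp add: A B)
    then show ?thesis
      by (simp add: A B)
  qed simp
qed

lemma mset_eq_if_prod_mset_chebyshev_S_eq:
  assumes "set_mset A \<subseteq> {1..}" "set_mset B \<subseteq> {1..}"
    and "(\<Prod>n\<in>#A. chebyshev_S n) = (\<Prod>n\<in>#B. chebyshev_S n :: int poly)"
  shows "A = B"
proof (rule mset_eq_if_prod_mset_eq[where P = "chebyshev_S :: nat \<Rightarrow> real poly"])
  show "\<exists>x. poly (chebyshev_S N) x = 0 \<and>
          (\<forall>m\<in>{1..}. m < N \<longrightarrow> poly (chebyshev_S m) x \<noteq> (0::real))"
    if "N \<in> {1..}" for N
    using that chebyshev_S_root[of N] chebyshev_S_pos[of _ N]
    by (intro exI[of _ "2 * cos (pi / Suc N)"]) (auto simp: less_imp_neq[symmetric])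
  have "map_poly of_int (\<Prod>n\<in>#A. chebyshev_S n)
      = (map_poly of_int (\<Prod>n\<in>#B. chebyshev_S n) :: real poly)"
    using assms(3) by simp
  then show "(\<Prod>n\<in>#A. chebyshev_S n) = (\<Prod>n\<in>#B. chebyshev_S n :: real poly)"
    by (simp add: map_poly_of_int_prod_mset map_poly_of_int_chebyshev_S)
qed (use assms chebyshev_S_neq_0 in auto)

theorem lemma4p4:
  fixes T :: "nat \<Rightarrow> int poly"
    and \<Sigma> :: "('a::field_char_0^2^2) set"
    and ns ms :: "nat list"
  assumes T_deg: "\<And>n. n \<ge> 1 \<Longrightarrow> degree (T n) = n"
    and T_trace: "\<And>n (s::'a^2^2). n \<ge> 1 \<Longrightarrow> s \<in> SL2 \<Longrightarrow>
                    sym_pow_trace n s = poly (map_poly of_int (T n)) (trace s)"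
    and ns_pos: "\<forall>n\<in>set ns. n \<ge> 1"
    and ms_pos: "\<forall>m\<in>set ms. m \<ge> 1"
    and \<Sigma>_sub: "\<Sigma> \<subseteq> SL2"
    and \<Sigma>_inf: "infinite \<Sigma>"
    and \<Sigma>_inj: "inj_on trace \<Sigma>"
    and prod_eq: "\<forall>s\<in>\<Sigma>. (\<Prod>n\<leftarrow>ns. poly (map_poly of_int (T n)) (trace s))
                        = (\<Prod>m\<leftarrow>ms. poly (map_poly of_int (T m)) (trace s))"
  shows "length ns = length ms \<and> mset ns = mset ms"
proof -
  have T_eq: "T n = chebyshev_S n" if "n \<ge> 1" for n
    using T_trace[OF that] by (rule sym_pow_trace_eq_chebyshev_S)
  have "(\<Prod>n\<in>#mset ns. poly (map_poly of_int (T n)) t)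
      = (\<Prod>n\<in>#mset ms. poly (map_poly of_int (T n)) t)"
    if "t \<in> trace ` \<Sigma>" for t
    using prod_eq that by (auto simp: prod_mset_prod_list simp flip: mset_map)
  moreover have "infinite (trace ` \<Sigma>)"
    using \<Sigma>_inf \<Sigma>_inj finite_image_iff by blast
  ultimately have "map_poly of_int (\<Prod>n\<in>#mset ns. T n)
      = (map_poly of_int (\<Prod>n\<in>#mset ms. T n) :: 'a poly)"
    by (intro poly_eqI_infinite) (simp_all add: map_poly_of_int_prod_mset poly_prod_mset)
  moreover have "image_mset T (mset xs) = image_mset chebyshev_S (mset xs)"
    if "\<forall>n\<in>set xs. n \<ge> 1" for xs
    using that T_eq by (intro image_mset_cong) auto
  ultimately have "(\<Prod>n\<in>#mset ns. chebyshev_S n) = (\<Prod>n\<in>#mset ms. chebyshev_S n :: int poly)"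
    using ns_pos ms_pos by (simp add: map_poly_of_int_eq_iff)
  then have "mset ns = mset ms"
    using ns_pos ms_pos by (intro mset_eq_if_prod_mset_chebyshev_S_eq) auto
  then show ?thesis
    by (metis size_mset)
qed

end
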